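(* Let $(b_n)_{n\ge0}$ be defined by $b_0=b_1=0$, $b_2=1$ and, for $n\ge3$, \[ b_n \;=\; \tfrac{19}{12}(n+1)-3 \;+\; \binom n2^{-1}\sum_{p=1}^{n}(n-p)\,b_{p-1}. \] Then for all $n\ge4$, \[ b_n=\frac{1}{24n(n-1)(n-2)}\Bigl(57n^4-48n^3H_n-178n^3+144n^2H_n+135n^2-96nH_n-14n+24\Bigr), \] and in particular $b_n\sim\tfrac{19}{8}n$ as $n\to\infty$.
   Context: $H_n=\sum_{k=1}^n1/k$ is the $n$-th harmonic number. (In the paper, $b_n=\mathbb E[\hat C_n]$ is the expected number of key comparisons made by Quickselect with Yaroslavskiy's dual-pivot partitioning to find the minimum of a uniformly random permutation of $n$ distinct keys.) *)

theory Defs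
  imports "HOL-Analysis.Analysis" "HOL-Library.Landau_Symbols"
begin

end

(*
  Multiplying the recurrence by binomial(n,2) leaves on the right the weighted sum
  sum_{j<n} (n-1-j) b_j, whose second difference in n is b_n. Hence
  A_n = binomial(n,2) (b_n - t_n), with t_n the toll 19/12 (n+1) - 3, satisfies the
  three-term recurrence A_{n+2} = b_n + 2 A_{n+1} - A_n for n >= 3.  The claimed closed
  form equals a rational function of n minus 2 H_n; it satisfies the same recurrence and
  agrees with b at n = 3 and n = 4, so it is b_n for all n >= 3.  As H_n = O(log n), the
  rational part, which is asymptotic to 19/8 n, dominates.
*)

theory Submission
  imports Defs "HOL-Real_Asymp.Real_Asymp"
begin

lemma of_nat_choose_two: "of_nat (n choose 2) = (of_nat n * (of_nat n - 1) / 2 :: 'a :: field_char_0)"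
proof (induction n)
  case (Suc n)
  have "Suc n choose 2 = n + (n choose 2)"
    by (simp add: numeral_2_eq_2)
  then show ?case
    using Suc by (simp add: field_simps)
qed simp

lemma weighted_sum_Suc:
  fixes b :: "nat \<Rightarrow> 'a :: comm_ring_1"
  shows "(\<Sum>j<Suc m. of_nat (m - j) * b j) = (\<Sum>j<m. of_nat (m - 1 - j) * b j) + (\<Sum>j<m. b j)"
proof -
  have "(\<Sum>j<Suc m. of_nat (m - j) * b j) = (\<Sum>j<m. of_nat (m - j) * b j)"
    by simp
  also have "\<dots> = (\<Sum>j<m. of_nat (m - 1 - j) * b j + b j)"
    by (intro sum.cong refl) (auto simp: of_nat_diff Suc_diff_Suc algebra_simps)
  finally show ?thesis
    by (simp add: sum.distrib)
qed

lemma weighted_sum_second_difference: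
  fixes b :: "nat \<Rightarrow> 'a :: comm_ring_1"
  shows "(\<Sum>j<n+2. of_nat (n + 1 - j) * b j) - 2 * (\<Sum>j<n+1. of_nat (n - j) * b j)
           + (\<Sum>j<n. of_nat (n - 1 - j) * b j) = b n"
  using weighted_sum_Suc[of "Suc n" b] weighted_sum_Suc[of n b] by (simp add: algebra_simps)

lemma harm_smallo_id: "harm \<in> o(\<lambda>n. real n)"
proof -
  have "eventually (\<lambda>n. norm (harm n :: real) \<le> 1 * norm (ln (real n) + 1)) at_top"
    using eventually_ge_at_top[of 1]
  proof eventually_elim
    case (elim n)
    have "harm 1 = (1 :: real)"
      by (simp add: harm_def)
    then show ?case
      using euler_mascheroni_sequence_decreasing[of 1 n] elim by auto
  qed
  then have "harm \<in> O(\<lambda>n. ln (real n) + 1)"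
    by (intro bigoI)
  moreover have "(\<lambda>n. ln (real n) + 1) \<in> o(\<lambda>n. real n)"
    by real_asymp
  ultimately show ?thesis
    by (rule landau_o.big_small_trans)
qed

definition binom_excess :: "(nat \<Rightarrow> real) \<Rightarrow> (nat \<Rightarrow> real) \<Rightarrow> nat \<Rightarrow> real" where
  "binom_excess toll f n = real (n choose 2) * (f n - toll n)"

lemma full_history_recurrence_imp_three_term:
  fixes b toll :: "nat \<Rightarrow> real"
  assumes "n0 \<ge> 2"
    and rec: "\<And>n. n \<ge> n0 \<Longrightarrow>
      b n = toll n + (1 / real (n choose 2)) * (\<Sum>p=1..n. real (n - p) * b (p - 1))"
    and "n \<ge> n0"
  shows "binom_excess toll b (n + 2)
           = b n + 2 * binom_excess toll b (n + 1) - binom_excess toll b n"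
proof -
  have excess_eq_sum: "binom_excess toll b m = (\<Sum>j<m. real (m - 1 - j) * b j)" if "m \<ge> n0" for m
  proof -
    have "real (m choose 2) \<noteq> 0"
      using that \<open>n0 \<ge> 2\<close> by simp
    moreover have "(\<Sum>p=1..m. real (m - p) * b (p - 1)) = (\<Sum>j<m. real (m - 1 - j) * b j)"
      by (simp add: sum.atLeast1_atMost_eq)
    ultimately show ?thesis
      using rec[OF that] by (simp add: binom_excess_def field_simps)
  qed
  show ?thesis
    using weighted_sum_second_difference[of n b] \<open>n \<ge> n0\<close>
    by (simp add: excess_eq_sum algebra_simps)
qed

lemma three_term_recurrence_unique:
  fixes f g toll :: "nat \<Rightarrow> real"
  assumes f_rec: "\<And>n. n \<ge> n0 \<Longrightarrow>
      binom_excess toll f (n + 2) = f n + 2 * binom_excess toll f (n + 1) - binom_excess toll f n"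
    and g_rec: "\<And>n. n \<ge> n0 \<Longrightarrow>
      binom_excess toll g (n + 2) = g n + 2 * binom_excess toll g (n + 1) - binom_excess toll g n"
    and "f n0 = g n0" "f (n0 + 1) = g (n0 + 1)"
  shows "n \<ge> n0 \<Longrightarrow> f n = g n"
proof -
  have "f n = g n \<and> f (n + 1) = g (n + 1)" if "n \<ge> n0" for n
    using that
  proof (induction n rule: nat_induct_at_least)
    case (Suc n)
    then have "binom_excess toll f (n + 2) = binom_excess toll g (n + 2)"
      using f_rec g_rec by (simp add: binom_excess_def)
    then have "f (n + 2) = g (n + 2)"
      by (simp add: binom_excess_def)
    with Suc show ?case
      by simp
  qed (use assms in simp)
  then show "n \<ge> n0 \<Longrightarrow> f n = g n"
    by blast
qed

definition harmonic_closed_form :: "nat \<Rightarrow> real" where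
  "harmonic_closed_form n =
     (57 * real n ^ 4 - 178 * real n ^ 3 + 135 * real n ^ 2 - 14 * real n + 24)
       / (24 * real n * (real n - 1) * (real n - 2)) - 2 * harm n"

lemma harmonic_closed_form_three_term:
  assumes "n \<ge> 3"
  defines "toll \<equiv> \<lambda>n. 19/12 * (real n + 1) - 3"
  shows "binom_excess toll harmonic_closed_form (n + 2)
           = harmonic_closed_form n + 2 * binom_excess toll harmonic_closed_form (n + 1)
             - binom_excess toll harmonic_closed_form n"
proof -
  define x where "x = real n"
  have nonzero: "x \<noteq> 0" "x - 1 \<noteq> 0" "x - 2 \<noteq> 0" "x + 1 \<noteq> 0" "x + 2 \<noteq> 0"
    using assms by (auto simp: x_def)
  have harm_shift: "harm (Suc n) = harm n + 1 / (x + 1)"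
    "harm (Suc (Suc n)) = harm n + 1 / (x + 1) + 1 / (x + 2)"
    by (simp_all add: x_def harm_Suc field_simps)
  show ?thesis
    unfolding binom_excess_def toll_def harmonic_closed_form_def of_nat_choose_two
    using nonzero
    by (simp add: x_def [symmetric] harm_shift divide_simps)
      (simp add: algebra_simps power2_eq_square power3_eq_cube power4_eq_xxxx)
qed

lemma harmonic_closed_form_eq:
  assumes "n \<ge> 3"
  shows "harmonic_closed_form n = (57 * real n ^ 4 - 48 * real n ^ 3 * harm n - 178 * real n ^ 3
            + 144 * real n ^ 2 * harm n + 135 * real n ^ 2 - 96 * real n * harm n
            - 14 * real n + 24) / (24 * real n * (real n - 1) * (real n - 2))"
proof -
  have "real n * (real n - 1) * (real n - 2) \<noteq> 0"
    using assms by auto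
  then show ?thesis
    unfolding harmonic_closed_form_def by (simp add: field_simps) (simp add: algebra_simps power_numeral_reduce)
qed

lemma harmonic_closed_form_3: "harmonic_closed_form 3 = 10/3"
  by (simp add: harmonic_closed_form_def harm_def numeral_3_eq_3)

lemma harmonic_closed_form_4: "harmonic_closed_form 4 = 61/12"
  by (simp add: harmonic_closed_form_def harm_def eval_nat_numeral atLeastAtMostSuc_conv)

lemma harmonic_closed_form_asymp_equiv: "harmonic_closed_form \<sim>[at_top] (\<lambda>n. 19/8 * real n)"
proof -
  have rational_part: "(\<lambda>n. (57 * real n ^ 4 - 178 * real n ^ 3 + 135 * real n ^ 2 - 14 * real n + 24)
       / (24 * real n * (real n - 1) * (real n - 2))) \<sim>[at_top] (\<lambda>n. 19/8 * real n)"
    by real_asymp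
  have "(\<lambda>n. - 2 * harm n) \<in> o(\<lambda>n. 19/8 * real n)"
    using harm_smallo_id by simp
  from asymp_equiv_add_right[OF this] rational_part show ?thesis
    unfolding harmonic_closed_form_def by simp
qed

theorem proposition5p3:
  fixes b :: "nat \<Rightarrow> real"
  assumes b0: "b 0 = 0" and b1: "b 1 = 0" and b2: "b 2 = 1"
    and rec: "\<And>n. n \<ge> 3 \<Longrightarrow>
      b n = 19/12 * (real n + 1) - 3
            + (1 / real (n choose 2)) * (\<Sum>p=1..n. real (n - p) * b (p - 1))"
  shows "(\<forall>n\<ge>4. b n = (57 * real n ^ 4 - 48 * real n ^ 3 * harm n - 178 * real n ^ 3
            + 144 * real n ^ 2 * harm n + 135 * real n ^ 2 - 96 * real n * harm n
            - 14 * real n + 24) / (24 * real n * (real n - 1) * (real n - 2)))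
         \<and> b \<sim>[at_top] (\<lambda>n. 19/8 * real n)"
proof -
  define toll where "toll = (\<lambda>n. 19/12 * (real n + 1) - 3 :: real)"
  have b3: "b 3 = 10/3"
    using rec[of 3] b0 b1 b2 by (simp add: numeral_3_eq_3 numeral_2_eq_2 atLeastAtMostSuc_conv)
  have b4: "b 4 = 61/12"
    using rec[of 4] b0 b1 b2 b3 by (simp add: eval_nat_numeral atLeastAtMostSuc_conv)
  have closed: "b n = harmonic_closed_form n" if "n \<ge> 3" for n
  proof (rule three_term_recurrence_unique[OF _ _ _ _ that])
    show "binom_excess toll b (n + 2) = b n + 2 * binom_excess toll b (n + 1) - binom_excess toll b n"
      if "n \<ge> 3" for n
      using full_history_recurrence_imp_three_term[of 3 b toll] rec that by (simp add: toll_def)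
  qed (use harmonic_closed_form_three_term b3 b4 harmonic_closed_form_3 harmonic_closed_form_4
        in \<open>simp_all add: toll_def\<close>)
  have "eventually (\<lambda>n. harmonic_closed_form n = b n) at_top"
    using eventually_ge_at_top[of 3] by eventually_elim (simp add: closed)
  then have "b \<sim>[at_top] (\<lambda>n. 19/8 * real n)"
    by (rule asymp_equiv_transfer[OF harmonic_closed_form_asymp_equiv]) simp
  then show ?thesis
    by (simp add: closed harmonic_closed_form_eq)
qed

end
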